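(* In the two-tier residency matching game described in the context, suppose $v\ge \frac{e}{e-1}$ and high-tier doctors submit lists of length $K\ge 1$. Then, under the large market approximation, the social welfare resulting from matches of high-tier doctors with high-tier hospitals in equilibrium is not less than the corresponding social welfare when $K=1$.
   Context: Model: there are $n$ high-tier and $rn$ low-tier doctors ($r>0$), and $n$ high-tier and $rn$ low-tier hospitals, each with one position. Every hospital prefers every high doctor to every low doctor and every doctor prefers every high hospital to every low hospital; within a tier, preferences are independent uniformly random permutations. Each doctor submits a ranked list of hospitals of the allowed length: a strategy $(k,K-k)$ lists his $k$ most preferred high hospitals followed by his $K-k$ most preferred low hospitals. Hospitals submit full true rankings; doctor-proposing deferred acceptance is run. Values: a doctor gets $v>1$ if matched to a high hospital, $1$ if matched to a low one, $0$ if unmatched; a hospital gets $v$ from a high doctor, $1$ from a low doctor, $0$ if unfilled; social welfare is the sum of all agents' values. Large market approximation: $n\to\infty$ with $r,K,v$ fixed; each application is accepted independently with a probability determined by the aggregate strategy profile via fixed-point equations (expected matched doctors = expected hospitals receiving at least one admissible application; a hospital receiving on average $\lambda$ applications gets none with probability $e^{-\lambda}$). Equilibrium means the symmetric Nash equilibrium (all doctors of a tier use the same, possibly mixed, strategy, each maximizing expected value given the acceptance probabilities). *)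

theory Defs
  imports Complex_Main
begin

text \<open>A (possibly mixed) symmetric strategy of the
high-tier doctors with list length K is a probability vector x over k in {0..K}, where
x k is the probability of playing (k, K-k).  p is the acceptance probability of an
application of a high doctor to a high hospital; q is the acceptance probability of an
application of a high doctor to a low hospital (determined elsewhere by the full
fixed point; here only 0 <= q <= 1 is used).  All aggregate quantities are per n.\<close>

definition mixed_strategy :: "nat \<Rightarrow> (nat \<Rightarrow> real) \<Rightarrow> bool" where
  "mixed_strategy K x \<longleftrightarrow> (\<forall>k\<le>K. 0 \<le> x k) \<and> (\<Sum>k\<le>K. x k) = 1"

text \<open>Expected number of high-hospital applications actually sent by a doctor listing k
high hospitals (he stops once accepted), and the probability he gets a high hospital.\<close>
definition apps_sent :: "real \<Rightarrow> nat \<Rightarrow> real" where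
  "apps_sent p k = (\<Sum>j<k. (1 - p) ^ j)"

definition high_match_prob :: "real \<Rightarrow> nat \<Rightarrow> real" where
  "high_match_prob p k = 1 - (1 - p) ^ k"

text \<open>Average number of applications received by a high hospital (lambda), and the
expected fraction of high doctors matched to high hospitals.\<close>
definition high_load :: "nat \<Rightarrow> (nat \<Rightarrow> real) \<Rightarrow> real \<Rightarrow> real" where
  "high_load K x p = (\<Sum>k\<le>K. x k * apps_sent p k)"

definition high_matched :: "nat \<Rightarrow> (nat \<Rightarrow> real) \<Rightarrow> real \<Rightarrow> real" where
  "high_matched K x p = (\<Sum>k\<le>K. x k * high_match_prob p k)"

definition doctor_value :: "real \<Rightarrow> real \<Rightarrow> real \<Rightarrow> nat \<Rightarrow> nat \<Rightarrow> real" where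
  "doctor_value v p q K k = v * high_match_prob p k + (1 - p) ^ k * (1 - (1 - q) ^ (K - k))"

text \<open>Fixed-point condition: expected matched doctors = expected hospitals receiving at
least one application (1 - exp(-lambda)); with no applications at all an application
would be accepted for sure (p = 1).\<close>
definition high_fixed_point :: "nat \<Rightarrow> (nat \<Rightarrow> real) \<Rightarrow> real \<Rightarrow> bool" where
  "high_fixed_point K x p \<longleftrightarrow> 0 \<le> p \<and> p \<le> 1 \<and>
     high_matched K x p = 1 - exp (- high_load K x p) \<and>
     (high_load K x p = 0 \<longrightarrow> p = 1)"

definition high_equilibrium :: "real \<Rightarrow> real \<Rightarrow> nat \<Rightarrow> (nat \<Rightarrow> real) \<Rightarrow> real \<Rightarrow> bool" where
  "high_equilibrium v q K x p \<longleftrightarrow> mixed_strategy K x \<and> high_fixed_point K x p \<and>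
     (\<forall>k\<le>K. 0 < x k \<longrightarrow> (\<forall>k'\<le>K. doctor_value v p q K k' \<le> doctor_value v p q K k))"

text \<open>Social welfare (per n) from high-doctor/high-hospital matches: each such match gives
v to the doctor and v to the hospital.\<close>
definition hh_welfare :: "real \<Rightarrow> nat \<Rightarrow> (nat \<Rightarrow> real) \<Rightarrow> real \<Rightarrow> real" where
  "hh_welfare v K x p = 2 * v * high_matched K x p"

end

theory Submission
  imports Defs
begin

text \<open>Equilibrium load under lists of length K is at least 1: if no high doctor lists zero high
hospitals, each sends at least one application; if some doctor lists none, then listing one
is no better, so the acceptance probability satisfies v p \<le> 1, i.e. p \<le> 1 - 1/e, and the
fixed point p l = 1 - e^-l, together with strict concavity of 1 - e^-l, rules out 0 < l < 1.
With lists of length 1 the load is at most 1. Since the matched fraction is 1 - e^-l, it is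
at least 1 - 1/e in the first case and at most 1 - 1/e in the second.\<close>

lemma one_minus_exp_minus_gt_chord:
  fixes l :: real
  assumes "0 < l" "l < 1"
  shows "l * (1 - exp (-1)) < 1 - exp (- l)"
proof -
  have pos: "exp (-l) > 0" by simp
  have "1 + l < exp l" and "1 + (l - 1) < exp (l - 1)"
    using exp_minus_greater[of "-l"] exp_minus_greater[of "1 - l"] assms by auto
  then have a: "exp (-l) * (1 + l) < 1" and b: "exp (-l) * l < exp (-1)"
    using mult_strict_left_mono[OF _ pos]
    by (fastforce simp flip: exp_add)+
  have "(1 - l) * (exp (-l) * (1 + l)) + l * (exp (-l) * l) < (1 - l) * 1 + l * exp (-1)"
    using a b assms by (intro add_strict_mono mult_strict_left_mono) auto
  then show ?thesis by (simp add: algebra_simps)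
qed

lemma fixed_point_load_ge_one:
  fixes p l :: real
  assumes "0 < l" "p \<le> 1 - exp (-1)" "p * l = 1 - exp (- l)"
  shows "1 \<le> l"
proof (rule ccontr)
  assume "\<not> 1 \<le> l"
  then have "l * (1 - exp (-1)) < p * l"
    using one_minus_exp_minus_gt_chord assms by simp
  moreover have "p * l \<le> l * (1 - exp (-1))"
    using mult_right_mono[OF assms(2), of l] assms(1) by (simp add: mult.commute)
  ultimately show False by simp
qed

lemma high_match_prob_eq_mult_apps_sent: "high_match_prob p k = p * apps_sent p k"
  unfolding high_match_prob_def apps_sent_def
  using one_diff_power_eq[of "1 - p" k] by simp

lemma high_matched_eq_mult_load: "high_matched K x p = p * high_load K x p"
  unfolding high_matched_def high_load_def high_match_prob_eq_mult_apps_sent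
  by (simp add: sum_distrib_left algebra_simps)

lemma apps_sent_nonneg: "p \<le> 1 \<Longrightarrow> 0 \<le> apps_sent p k"
  unfolding apps_sent_def by (intro sum_nonneg) auto

lemma one_le_apps_sent:
  assumes "1 \<le> k" "p \<le> 1"
  shows "1 \<le> apps_sent p k"
proof -
  have "apps_sent p k = 1 + (\<Sum>j\<in>{..<k}-{0}. (1 - p) ^ j)"
    unfolding apps_sent_def using assms by (subst sum.remove[of _ 0]) auto
  moreover have "0 \<le> (\<Sum>j\<in>{..<k}-{0}. (1 - p) ^ j)"
    using assms by (intro sum_nonneg) auto
  ultimately show ?thesis by simp
qed

lemma high_load_nonneg:
  assumes "mixed_strategy K x" "p \<le> 1"
  shows "0 \<le> high_load K x p"
  using assms apps_sent_nonneg unfolding high_load_def mixed_strategy_def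
  by (intro sum_nonneg mult_nonneg_nonneg) auto

lemma high_load_ge_one_if_all_apply:
  assumes "mixed_strategy K x" "x 0 = 0" "p \<le> 1"
  shows "1 \<le> high_load K x p"
proof -
  have "1 = (\<Sum>k\<le>K. x k * 1)"
    using assms(1) by (simp add: mixed_strategy_def)
  also have "\<dots> \<le> (\<Sum>k\<le>K. x k * apps_sent p k)"
  proof (intro sum_mono)
    fix k assume "k \<in> {..K}"
    then have "0 \<le> x k" using assms(1) by (simp add: mixed_strategy_def)
    then show "x k * 1 \<le> x k * apps_sent p k"
      using assms one_le_apps_sent[of k p]
      by (cases "k = 0") (auto dest: mult_left_mono)
  qed
  finally show ?thesis unfolding high_load_def .
qed

lemma acceptance_prob_le_if_no_high_applications_optimal:
  assumes "doctor_value v p q K 1 \<le> doctor_value v p q K 0"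
    and "1 \<le> K" "0 \<le> q" "q \<le> 1" "p \<le> 1"
  shows "v * p \<le> 1"
proof -
  have "0 \<le> (1 - p) * (1 - (1 - q) ^ (K - 1))"
    using assms by (simp add: power_le_one)
  then have "v * p \<le> doctor_value v p q K 1"
    unfolding doctor_value_def high_match_prob_def by simp
  moreover have "doctor_value v p q K 0 \<le> 1"
    unfolding doctor_value_def high_match_prob_def using assms by simp
  ultimately show ?thesis using assms(1) by linarith
qed

lemma one_lt_exp_one_ratio: "1 < exp 1 / (exp 1 - 1 :: real)"
proof -
  have "1 < exp (1::real)" by simp
  then show ?thesis by (simp add: field_simps)
qed

lemma inverse_le_one_minus_exp_minus_one:
  fixes v :: real
  assumes "exp 1 / (exp 1 - 1) \<le> v"
  shows "1 / v \<le> 1 - exp (-1)"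
proof -
  have "1 / v \<le> 1 / (exp 1 / (exp 1 - 1))"
    using assms one_lt_exp_one_ratio by (intro divide_left_mono mult_pos_pos) linarith+
  also have "\<dots> = 1 - exp (-1)"
    by (simp add: field_simps exp_minus)
  finally show ?thesis .
qed

lemma high_equilibrium_load_ge_one:
  assumes "exp 1 / (exp 1 - 1) \<le> v" "1 \<le> K" "0 \<le> q" "q \<le> 1"
    and eq: "high_equilibrium v q K x p"
  shows "1 \<le> high_load K x p"
proof -
  have strat: "mixed_strategy K x" and fp: "high_fixed_point K x p"
    using eq by (simp_all add: high_equilibrium_def)
  then have p: "0 \<le> p" "p \<le> 1" by (simp_all add: high_fixed_point_def)
  show ?thesis
  proof (cases "x 0 > 0")
    case False
    then have "x 0 = 0" using strat by (force simp: mixed_strategy_def)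
    then show ?thesis using high_load_ge_one_if_all_apply strat p by blast
  next
    case True
    then have "doctor_value v p q K 1 \<le> doctor_value v p q K 0"
      using eq assms(2) by (simp add: high_equilibrium_def)
    then have "v * p \<le> 1"
      using acceptance_prob_le_if_no_high_applications_optimal assms p by blast
    moreover have "0 < v"
      using assms(1) one_lt_exp_one_ratio by linarith
    ultimately have "p \<le> 1 / v"
      by (simp add: field_simps)
    then have p_small: "p \<le> 1 - exp (-1)"
      using inverse_le_one_minus_exp_minus_one assms(1) by fastforce
    then have "p \<noteq> 1" by (smt (verit) exp_gt_zero)
    then have "high_load K x p \<noteq> 0" using fp by (auto simp: high_fixed_point_def)
    then have "0 < high_load K x p" using high_load_nonneg strat p by force
    then show ?thesis using p_small
      using fixed_point_load_ge_one fp high_matched_eq_mult_load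
      by (simp add: high_fixed_point_def)
  qed
qed

lemma high_matched_single_application_le:
  assumes "high_equilibrium v q 1 x p"
  shows "high_matched 1 x p \<le> 1 - exp (-1)"
proof -
  have "high_load 1 x p = x 1" unfolding high_load_def apps_sent_def by simp
  moreover have "x 1 \<le> 1"
    using assms by (auto simp: high_equilibrium_def mixed_strategy_def)
  ultimately show ?thesis
    using assms by (simp add: high_equilibrium_def high_fixed_point_def)
qed

theorem lemma3:
  fixes v q q1 p p1 :: real and K :: nat and x x1 :: "nat \<Rightarrow> real"
  assumes "v \<ge> exp 1 / (exp 1 - 1)"
    and "K \<ge> 1"
    and "0 \<le> q" "q \<le> 1" "0 \<le> q1" "q1 \<le> 1"
    and "high_equilibrium v q K x p"
    and "high_equilibrium v q1 1 x1 p1"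
  shows "hh_welfare v K x p \<ge> hh_welfare v 1 x1 p1"
proof -
  have "1 \<le> high_load K x p"
    using high_equilibrium_load_ge_one assms by blast
  then have "1 - exp (-1) \<le> high_matched K x p"
    using assms(7) by (simp add: high_equilibrium_def high_fixed_point_def)
  then have "high_matched 1 x1 p1 \<le> high_matched K x p"
    using high_matched_single_application_le[OF assms(8)] by linarith
  moreover have "0 < v"
    using assms(1) one_lt_exp_one_ratio by linarith
  ultimately show ?thesis unfolding hh_welfare_def by simp
qed

end
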